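(* Let $L$ be a multiplicative lattice and $q$ a proper element of $L$. Then $\sqrt{q}$, $Nil(L)$ and $Jac(L)$ are quasi $n$-absorbing elements of $L$ for all $n\ge2$.
   Context: A multiplicative lattice is a complete lattice $L$ with least element $0$ and compact greatest element $1$, equipped with a commutative, associative product that distributes over arbitrary joins and has $1$ as multiplicative identity. An element $a$ is compact if $a\le\bigvee_{\alpha\in I}a_\alpha$ implies $a\le\bigvee_{\alpha\in I_0}a_\alpha$ for some finite $I_0\subseteq I$; $L_*$ denotes the set of compact elements. A proper element $p$ ($p<1$) is prime if $ab\le p$ with $a,b\in L$ implies $a\le p$ or $b\le p$; a proper element $m$ is maximal if $m<x\le1$ implies $x=1$. For $a\in L$, $\sqrt{a}=\bigwedge\{p: p \text{ prime}, a\le p\}$; $Nil(L)=\sqrt{0}$; $Jac(L)=\bigwedge\{m: m \text{ maximal}\}$. A proper element $q$ is quasi $n$-absorbing if whenever $a^nb\le q$ for some $a,b\in L_*$, then $a^n\le q$ or $a^{n-1}b\le q$. *)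

theory Defs
  imports Main
begin

text \<open>A multiplicative lattice: a complete lattice (type class; bot = 0, top = 1)
  with a product operation mult.\<close>

definition compact_elem :: "'a::complete_lattice \<Rightarrow> bool" where
  "compact_elem a \<longleftrightarrow> (\<forall>S. a \<le> Sup S \<longrightarrow> (\<exists>T\<subseteq>S. finite T \<and> a \<le> Sup T))"

definition mult_lattice :: "('a::complete_lattice \<Rightarrow> 'a \<Rightarrow> 'a) \<Rightarrow> bool" where
  "mult_lattice mult \<longleftrightarrow>
     compact_elem (top::'a) \<and>
     (\<forall>a b. mult a b = mult b a) \<and>
     (\<forall>a b c. mult (mult a b) c = mult a (mult b c)) \<and>
     (\<forall>a S. mult a (Sup S) = Sup (mult a ` S)) \<and>
     (\<forall>a. mult top a = a)"

primrec mpow :: "('a::complete_lattice \<Rightarrow> 'a \<Rightarrow> 'a) \<Rightarrow> 'a \<Rightarrow> nat \<Rightarrow> 'a" where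
  "mpow mult a 0 = top"
| "mpow mult a (Suc n) = mult a (mpow mult a n)"

definition prime_elem_ml :: "('a::complete_lattice \<Rightarrow> 'a \<Rightarrow> 'a) \<Rightarrow> 'a \<Rightarrow> bool" where
  "prime_elem_ml mult p \<longleftrightarrow> p < top \<and> (\<forall>a b. mult a b \<le> p \<longrightarrow> a \<le> p \<or> b \<le> p)"

definition maximal_elem_ml :: "'a::complete_lattice \<Rightarrow> bool" where
  "maximal_elem_ml m \<longleftrightarrow> m < top \<and> (\<forall>x. m < x \<longrightarrow> x = top)"

definition rad_ml :: "('a::complete_lattice \<Rightarrow> 'a \<Rightarrow> 'a) \<Rightarrow> 'a \<Rightarrow> 'a" where
  "rad_ml mult a = Inf {p. prime_elem_ml mult p \<and> a \<le> p}"

definition Nil_ml :: "('a::complete_lattice \<Rightarrow> 'a \<Rightarrow> 'a) \<Rightarrow> 'a" where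
  "Nil_ml mult = rad_ml mult bot"

definition Jac_ml :: "'a::complete_lattice" where
  "Jac_ml = Inf {m. maximal_elem_ml m}"

definition quasi_n_absorbing :: "('a::complete_lattice \<Rightarrow> 'a \<Rightarrow> 'a) \<Rightarrow> nat \<Rightarrow> 'a \<Rightarrow> bool" where
  "quasi_n_absorbing mult n q \<longleftrightarrow> q < top \<and>
     (\<forall>a b. compact_elem a \<and> compact_elem b \<and> mult (mpow mult a n) b \<le> q \<longrightarrow>
        mpow mult a n \<le> q \<or> mult (mpow mult a (n - 1)) b \<le> q)"

end

theory Submission
  imports Defs
begin

text \<open>A prime element containing \<open>a^n b\<close> contains \<open>a\<close> or \<open>b\<close>, and in either case it
  contains \<open>a^(n-1) b\<close> because \<open>n - 1 \<ge> 1\<close>. Hence every infimum of a nonempty set of primes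
  is quasi \<open>n\<close>-absorbing. Since \<open>1\<close> is compact, Zorn's lemma gives a maximal element above
  every proper element, and maximal elements are prime; so \<open>\<surd>q\<close>, \<open>Nil(L)\<close> and \<open>Jac(L)\<close>
  are infima of nonempty sets of primes.\<close>

lemma ml_compact_top:
  assumes "mult_lattice (mult :: 'a::complete_lattice \<Rightarrow> 'a \<Rightarrow> 'a)"
  shows "compact_elem (top::'a)"
  using assms unfolding mult_lattice_def by blast

lemma ml_mult_commute:
  assumes "mult_lattice mult"
  shows "mult a b = mult b a"
  using assms unfolding mult_lattice_def by blast

lemma ml_mult_top_right:
  assumes "mult_lattice mult"
  shows "mult a top = a"
  using assms unfolding mult_lattice_def by (metis (no_types))

lemma ml_mult_sup:
  assumes "mult_lattice mult"
  shows "mult c (sup a b) = sup (mult c a) (mult c b)"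
proof -
  have "mult c (Sup {a, b}) = Sup (mult c ` {a, b})"
    using assms unfolding mult_lattice_def by blast
  then show ?thesis by simp
qed

lemma ml_mult_mono:
  assumes "mult_lattice mult" "a \<le> b"
  shows "mult c a \<le> mult c b"
proof -
  have "mult c b = sup (mult c a) (mult c b)"
    using ml_mult_sup[OF assms(1), of c a b] assms(2) by (simp add: sup_absorb2)
  then show ?thesis by (metis sup.cobounded1)
qed

lemma ml_mult_le_right:
  assumes "mult_lattice mult"
  shows "mult x y \<le> y"
  using ml_mult_mono[OF assms top_greatest, of y x] assms
  by (simp add: mult_lattice_def)

lemma ml_mult_le_left:
  assumes "mult_lattice mult"
  shows "mult x y \<le> x"
  using ml_mult_le_right[OF assms] ml_mult_commute[OF assms] by metis

lemma ml_mpow_le: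
  assumes "mult_lattice mult" "k \<ge> 1"
  shows "mpow mult a k \<le> a"
  using assms(2) by (cases k) (auto simp: ml_mult_le_left[OF assms(1)])

lemma Sup_in_chain:
  fixes F :: "'a::complete_lattice set"
  assumes "finite F" "F \<noteq> {}" "\<forall>x\<in>F. \<forall>y\<in>F. x \<le> y \<or> y \<le> x"
  shows "Sup F \<in> F"
  using assms
proof (induction F rule: finite_ne_induct)
  case (insert x F)
  then have "Sup F \<in> F" by blast
  moreover from this have "x \<le> Sup F \<or> Sup F \<le> x"
    using insert.prems by blast
  ultimately show ?case by (auto simp: sup_absorb1 sup_absorb2)
qed simp

lemma compact_top_Sup_chain_less_top:
  fixes C :: "'a::complete_lattice set"
  assumes "compact_elem (top::'a)" "C \<noteq> {}" "\<forall>c\<in>C. c < top"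
    and "\<forall>x\<in>C. \<forall>y\<in>C. x \<le> y \<or> y \<le> x"
  shows "Sup C < top"
proof (rule ccontr)
  assume "\<not> Sup C < top"
  then have "top \<le> Sup C"
    by (metis less_top order_refl)
  then obtain T where T: "T \<subseteq> C" "finite T" "top \<le> Sup T"
    using assms(1) unfolding compact_elem_def by blast
  obtain c where c: "c \<in> C" "c < top"
    using assms(2,3) by blast
  have "Sup T \<in> C"
  proof (cases "T = {}")
    case True
    then have "top \<le> c"
      using T(3) by (simp add: bot_unique)
    then show ?thesis
      using c(2) by simp
  next
    case False
    then show ?thesis
      using Sup_in_chain[OF T(2)] T(1) assms(4) by blast
  qed
  then show False
    using T(3) assms(3) top.extremum_unique by fastforce
qed

lemma ex_maximal_elem_ml_above:
  fixes q :: "'a::complete_lattice"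
  assumes "compact_elem (top::'a)" "q < top"
  shows "\<exists>m. maximal_elem_ml m \<and> q \<le> m"
proof -
  define A where "A = {x. q \<le> x \<and> x < (top::'a)}"
  have po: "partial_order_on A (relation_of (\<le>) A)"
    by (rule partial_order_on_relation_ofI) auto
  have "\<exists>u\<in>A. \<forall>c\<in>C. c \<le> u" if C: "C \<in> Chains (relation_of (\<le>) A)" for C
  proof (cases "C = {}")
    case True
    then show ?thesis using assms(2) unfolding A_def by auto
  next
    case False
    have CA: "C \<subseteq> A" using Chains_relation_of[OF C] .
    have "\<forall>c\<in>C. c < top"
      using CA unfolding A_def by blast
    moreover have "\<forall>x\<in>C. \<forall>y\<in>C. x \<le> y \<or> y \<le> x"
      using C unfolding Chains_def relation_of_def by blast
    ultimately have "Sup C < top"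
      by (rule compact_top_Sup_chain_less_top[OF assms(1) False])
    moreover obtain c where "c \<in> C"
      using False by blast
    then have "q \<le> Sup C"
      using CA unfolding A_def by (blast intro: Sup_upper2)
    ultimately show ?thesis unfolding A_def by (auto intro: Sup_upper)
  qed
  then obtain m where m: "m \<in> A" "\<forall>a\<in>A. m \<le> a \<longrightarrow> a = m"
    using predicate_Zorn[OF po] by blast
  have "maximal_elem_ml m"
    unfolding maximal_elem_ml_def
  proof (intro conjI allI impI)
    show "m < top" using m(1) unfolding A_def by blast
    fix x assume "m < x"
    show "x = top"
    proof (rule ccontr)
      assume "x \<noteq> top"
      then have "x < top"
        using less_top by blast
      then have "x \<in> A"
        using m(1) \<open>m < x\<close> unfolding A_def by auto
      then show False using m(2) \<open>m < x\<close> by auto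
    qed
  qed
  then show ?thesis using m(1) unfolding A_def by blast
qed

lemma maximal_imp_prime_elem_ml:
  assumes ml: "mult_lattice mult" and m: "maximal_elem_ml m"
  shows "prime_elem_ml mult m"
  unfolding prime_elem_ml_def
proof (intro conjI allI impI)
  show "m < top" using m maximal_elem_ml_def by blast
  fix a b assume ab: "mult a b \<le> m"
  show "a \<le> m \<or> b \<le> m"
  proof (rule ccontr)
    assume not_le: "\<not> (a \<le> m \<or> b \<le> m)"
    then have "m < sup m a"
      by (metis sup.cobounded1 sup.cobounded2 order.not_eq_order_implies_strict)
    then have "sup m a = top" using m maximal_elem_ml_def by blast
    then have "b = sup (mult b m) (mult a b)"
      using ml_mult_sup[OF ml, of b m a] ml_mult_top_right[OF ml, of b]
        ml_mult_commute[OF ml, of b a] by simp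
    also have "\<dots> \<le> m"
      using ab ml_mult_le_right[OF ml, of b m] by simp
    finally show False using not_le by blast
  qed
qed

lemma ex_prime_elem_ml_above:
  assumes "mult_lattice mult" "x < top"
  shows "\<exists>p. prime_elem_ml mult p \<and> x \<le> p"
  using ex_maximal_elem_ml_above[OF ml_compact_top[OF assms(1)] assms(2)]
    maximal_imp_prime_elem_ml[OF assms(1)]
  by blast

lemma prime_elem_ml_mpow_le:
  assumes "prime_elem_ml mult p" "k \<ge> 1" "mpow mult a k \<le> p"
  shows "a \<le> p"
  using assms(2,3)
proof (induction k)
  case (Suc k)
  have "mult a (mpow mult a k) \<le> p"
    using Suc.prems(2) by simp
  then have "a \<le> p \<or> mpow mult a k \<le> p"
    using assms(1) unfolding prime_elem_ml_def by blast
  moreover have "\<not> mpow mult a 0 \<le> p"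
    using assms(1) unfolding prime_elem_ml_def by (auto simp: top_unique)
  ultimately show ?case
    using Suc.IH by (cases k) auto
qed simp

lemma prime_elem_ml_mult_mpow_pred:
  assumes ml: "mult_lattice mult" and p: "prime_elem_ml mult p" and "n \<ge> 2"
    and le: "mult (mpow mult a n) b \<le> p"
  shows "mult (mpow mult a (n - 1)) b \<le> p"
proof -
  have "mpow mult a n \<le> p \<or> b \<le> p"
    using p le unfolding prime_elem_ml_def by blast
  then have "a \<le> p \<or> b \<le> p"
    using prime_elem_ml_mpow_le[OF p, of n a] \<open>n \<ge> 2\<close> by auto
  moreover have "mult (mpow mult a (n - 1)) b \<le> a"
  proof -
    have "mpow mult a (n - 1) \<le> a"
      using ml_mpow_le[OF ml] \<open>n \<ge> 2\<close> by simp
    then show ?thesis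
      using ml_mult_le_left[OF ml] order_trans by blast
  qed
  ultimately show ?thesis
    using ml_mult_le_right[OF ml] order_trans by blast
qed

lemma Inf_prime_elems_quasi_n_absorbing:
  assumes ml: "mult_lattice mult" and "n \<ge> 2"
    and primes: "\<forall>p\<in>S. prime_elem_ml mult p" and "S \<noteq> {}"
  shows "quasi_n_absorbing mult n (Inf S)"
  unfolding quasi_n_absorbing_def
proof (intro conjI allI impI)
  show "Inf S < top"
    using \<open>S \<noteq> {}\<close> primes unfolding prime_elem_ml_def
    by (meson Inf_lower all_not_in_conv order_le_less_trans)
  fix a b assume "compact_elem a \<and> compact_elem b \<and> mult (mpow mult a n) b \<le> Inf S"
  then have "mult (mpow mult a (n - 1)) b \<le> Inf S"
    using prime_elem_ml_mult_mpow_pred[OF ml _ \<open>n \<ge> 2\<close>] primes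
    by (meson Inf_greatest Inf_lower order_trans)
  then show "mpow mult a n \<le> Inf S \<or> mult (mpow mult a (n - 1)) b \<le> Inf S" ..
qed

theorem mainTheorem6:
  fixes mult :: "'a::complete_lattice \<Rightarrow> 'a \<Rightarrow> 'a" and q :: 'a and n :: nat
  assumes "mult_lattice mult"
    and "q < top"
    and "n \<ge> 2"
  shows "quasi_n_absorbing mult n (rad_ml mult q) \<and>
         quasi_n_absorbing mult n (Nil_ml mult) \<and>
         quasi_n_absorbing mult n (Jac_ml :: 'a)"
proof -
  note qna = Inf_prime_elems_quasi_n_absorbing[OF assms(1,3)]
  have "(bot::'a) < top" using assms(2) by (metis bot.extremum order_le_less_trans)
  have "quasi_n_absorbing mult n (rad_ml mult x)" if "x < top" for x
    unfolding rad_ml_def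
    by (rule qna) (use ex_prime_elem_ml_above[OF assms(1) that] in auto)
  moreover have "quasi_n_absorbing mult n (Jac_ml :: 'a)"
    unfolding Jac_ml_def
    by (rule qna)
      (use ex_maximal_elem_ml_above[OF ml_compact_top[OF assms(1)] \<open>bot < top\<close>]
         maximal_imp_prime_elem_ml[OF assms(1)] in auto)
  ultimately show ?thesis
    using assms(2) \<open>bot < top\<close> unfolding Nil_ml_def by blast
qed

end
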